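(* Let $p$ be a prime and let $\rho\in[2,p-1]$. Then $$t_\rho(\mathbb{Z}_p)=s_\rho(\mathbb{Z}_p)=\left\lfloor\frac{p-2}{\rho-1}\right\rfloor+1.$$
   Context: Groups are written additively; $\mathbb{Z}_p=\mathbb{Z}/p\mathbb{Z}$. For $A\subseteq G$ let $A_0:=A\cup\{0\}$ and $\langle A\rangle^+_\rho:=\rho A_0=\{a_1+\dots+a_\rho:a_i\in A_0\}$. $\operatorname{diam}^+_A(G):=\min\{\rho\in\mathbb{N}_0:\langle A\rangle^+_\rho=G\}$ ($\min\varnothing=\infty$). The period of $S\subseteq G$ is $\pi(S):=\{g\in G:S+g=S\}$; $S$ is aperiodic if $\pi(S)=\{0\}$. A subset $A\subseteq G$ is $\rho$-maximal if it is maximal under inclusion subject to $\operatorname{diam}^+_A(G)\ge\rho$, i.e. subject to $\langle A\rangle^+_{\rho-1}\neq G$. With the convention $\max\varnothing=0$: $s_\rho(G):=\max\{|A|: A\subseteq G,\ \rho\le\operatorname{diam}^+_A(G)<\infty\}$ and $t_\rho(G):=\max\{|A|: A \text{ is an aperiodic } \rho\text{-maximal generating set for } G\}$. *)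

theory Defs
  imports "Berlekamp_Zassenhaus.Finite_Field" "HOL-Library.Extended_Nat"
begin

text \<open>All notions are for the whole (additive abelian) group UNIV of a type.\<close>

fun sumset_pow :: "nat \<Rightarrow> 'a::ab_group_add set \<Rightarrow> 'a set" where
  "sumset_pow 0 A = {0}"
| "sumset_pow (Suc n) A = {a + b | a b. a \<in> insert 0 A \<and> b \<in> sumset_pow n A}"

definition diam_plus :: "'a::ab_group_add set \<Rightarrow> enat" where
  "diam_plus A = (if \<exists>r. sumset_pow r A = UNIV
                   then enat (LEAST r. sumset_pow r A = UNIV) else \<infinity>)"

definition period :: "'a::ab_group_add set \<Rightarrow> 'a set" where
  "period S = {g. (\<lambda>s. s + g) ` S = S}"

definition aperiodic :: "'a::ab_group_add set \<Rightarrow> bool" where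
  "aperiodic S \<longleftrightarrow> period S = {0}"

definition rho_maximal :: "nat \<Rightarrow> 'a::ab_group_add set \<Rightarrow> bool" where
  "rho_maximal rho A \<longleftrightarrow> enat rho \<le> diam_plus A \<and>
     (\<forall>B. A \<subset> B \<longrightarrow> \<not> enat rho \<le> diam_plus B)"

definition generates :: "'a::ab_group_add set \<Rightarrow> bool" where
  "generates A \<longleftrightarrow> (\<forall>H. 0 \<in> H \<and> (\<forall>x\<in>H. \<forall>y\<in>H. x + y \<in> H) \<and> (\<forall>x\<in>H. - x \<in> H)
                       \<and> A \<subseteq> H \<longrightarrow> H = UNIV)"

text \<open>Maxima with the convention max of the empty set = 0.\<close>
definition s_rho :: "nat \<Rightarrow> 'a::{ab_group_add,finite} itself \<Rightarrow> nat" where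
  "s_rho rho _ = Max (insert 0 (card ` {A :: 'a set. enat rho \<le> diam_plus A \<and> diam_plus A < \<infinity>}))"

definition t_rho :: "nat \<Rightarrow> 'a::{ab_group_add,finite} itself \<Rightarrow> nat" where
  "t_rho rho _ = Max (insert 0 (card ` {A :: 'a set. aperiodic A \<and> rho_maximal rho A \<and> generates A}))"

end

theory Submission
  imports Defs
begin

(*
  Upper bound: by the Cauchy-Davenport theorem (proved here via Dyson's e-transform),
  the (\<rho>-1)-fold sumset of A \<union> {0} has at least min p ((\<rho>-1)(|A \<union> {0}| - 1) + 1)
  elements; if it is not all of Z_p this forces |A| \<le> M.

  Lower bound: the (\<rho>-1)-fold sumset of {0, ..., M-1} lies in {0, ..., (\<rho>-1)(M-1)},
  a proper subset of Z_p; its diameter is finite since it contains a nonzero element.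
  By the upper bound every strict superset has diameter < \<rho>, so it is \<rho>-maximal;
  it is aperiodic and generating because in Z_p every nonzero element generates
  the whole group.
*)

section \<open>Arithmetic in Z_p through representatives\<close>

lemma of_int_mod_ring_add:
  "(of_int_mod_ring (a + b) :: 'p::finite mod_ring) = of_int_mod_ring a + of_int_mod_ring b"
  by transfer (simp add: mod_simps)

lemma of_int_mod_ring_0 [simp]: "(of_int_mod_ring 0 :: 'p::finite mod_ring) = 0"
  by transfer simp

lemma of_int_mod_ring_mult:
  "(of_int_mod_ring (a * b) :: 'p::finite mod_ring) = of_int_mod_ring a * of_int_mod_ring b"
  by transfer (simp add: mod_simps)

lemma of_int_mod_ring_eq_iff:
  "((of_int_mod_ring a :: 'p::finite mod_ring) = of_int_mod_ring b) \<longleftrightarrow> [a = b] (mod int CARD('p))"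
  by transfer (simp add: cong_def)

lemma of_int_mod_ring_one_mult: "(of_int_mod_ring 1 :: 'p::finite mod_ring) * d = d"
proof transfer
  fix d :: int assume d: "d \<in> {0..<int CARD('p)}"
  show "1 mod int CARD('p) * d mod int CARD('p) = d"
  proof (cases "CARD('p) = 1")
    case True then show ?thesis using d by simp
  next
    case False
    have "CARD('p) > 0" by simp
    with False have "CARD('p) > 1" by linarith
    then show ?thesis using d by simp
  qed
qed

lemma mod_ring_multiple_of_nonzero:
  fixes d x :: "'p::finite mod_ring"
  assumes p: "prime CARD('p)" and d: "d \<noteq> 0"
  obtains n :: nat where "x = of_int_mod_ring (int n) * d"
proof -
  define P where "P = int CARD('p)"
  define t where "t = to_int_mod_ring d"
  define k where "k = to_int_mod_ring x"
  have P: "prime P" "P > 0" using p prime_gt_0_int unfolding P_def by auto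
  have t_range: "0 \<le> t" "t < P" using range_to_int_mod_ring[where 'a='p] unfolding t_def P_def by auto
  have "t \<noteq> 0" using d of_int_mod_ring_to_int_mod_ring[of d] unfolding t_def by force
  with t_range have "\<not> P dvd t" using zdvd_imp_le by force
  then have "coprime t P" using P(1) prime_imp_coprime coprime_commute by blast
  then obtain s where s: "[t * s = 1] (mod P)" using cong_solve_coprime_int by blast
  define n where "n = nat ((k * s) mod P)"
  have "[int n = k * s] (mod P)" unfolding n_def cong_def using P(2) by simp
  then have "[int n * t = k * (t * s)] (mod P)" by (metis cong_scalar_right mult.commute mult.left_commute)
  also have "[k * (t * s) = k * 1] (mod P)" using s by (rule cong_scalar_left)
  finally have "of_int_mod_ring (int n * t) = (of_int_mod_ring k :: 'p mod_ring)"
    unfolding of_int_mod_ring_eq_iff P_def by simp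
  then have "x = of_int_mod_ring (int n) * of_int_mod_ring t" by (simp add: k_def of_int_mod_ring_mult)
  then show thesis using that by (simp add: t_def)
qed

lemma shift_closed_contains_multiples:
  fixes S :: "'p::finite mod_ring set"
  assumes "a \<in> S" and closed: "\<forall>x\<in>S. x + d \<in> S"
  shows "a + of_int_mod_ring (int n) * d \<in> S"
proof (induction n)
  case 0 then show ?case using assms(1) by simp
next
  case (Suc n)
  have "a + of_int_mod_ring (int (Suc n)) * d = (a + of_int_mod_ring (int n) * d) + d"
    by (simp add: of_int_mod_ring_add distrib_right of_int_mod_ring_one_mult add.assoc)
  then show ?case using Suc closed by metis
qed

lemma shift_invariant_is_UNIV:
  fixes A :: "'p::finite mod_ring set"
  assumes p: "prime CARD('p)" and "d \<noteq> 0" and "a \<in> A" and "\<forall>x\<in>A. x + d \<in> A"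
  shows "A = UNIV"
proof -
  have "x \<in> A" for x
  proof -
    obtain n where "x - a = of_int_mod_ring (int n) * d"
      using mod_ring_multiple_of_nonzero[OF p \<open>d \<noteq> 0\<close>] by blast
    then show ?thesis using shift_closed_contains_multiples[OF assms(3,4), of n] by (metis diff_add_cancel add.commute)
  qed
  then show ?thesis by blast
qed

lemma aperiodic_if_proper:
  fixes A :: "'p::finite mod_ring set"
  assumes p: "prime CARD('p)" and "A \<noteq> {}" and "A \<noteq> UNIV"
  shows "aperiodic A"
proof -
  have "g = 0" if "(\<lambda>s. s + g) ` A = A" for g
    using shift_invariant_is_UNIV[OF p, of g _ A] that assms(2,3) by blast
  then show ?thesis unfolding aperiodic_def period_def by auto
qed

lemma generates_if_nonzero:
  fixes A :: "'p::finite mod_ring set"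
  assumes p: "prime CARD('p)" and "d \<in> A" and "d \<noteq> 0"
  shows "generates A"
  unfolding generates_def
proof (intro allI impI)
  fix H :: "'p mod_ring set"
  assume H: "0 \<in> H \<and> (\<forall>x\<in>H. \<forall>y\<in>H. x + y \<in> H) \<and> (\<forall>x\<in>H. - x \<in> H) \<and> A \<subseteq> H"
  then have "\<forall>x\<in>H. x + d \<in> H" using assms(2) by blast
  then show "H = UNIV" using shift_invariant_is_UNIV[OF p \<open>d \<noteq> 0\<close>] H by blast
qed

section \<open>The Cauchy-Davenport theorem\<close>

definition sset :: "'a::ab_group_add set \<Rightarrow> 'a set \<Rightarrow> 'a set" where
  "sset A B = {a + b | a b. a \<in> A \<and> b \<in> B}"

text \<open>Dyson's e-transform: it does not enlarge the sumset and preserves |A| + |B|.\<close>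

lemma dyson_transform:
  fixes A B :: "'a::ab_group_add set" and e :: 'a
  assumes "finite A" "finite B"
  defines "A' \<equiv> A \<union> (\<lambda>b. b + e) ` B" and "B' \<equiv> B \<inter> {y. y + e \<in> A}"
  shows "sset A' B' \<subseteq> sset A B" and "card A' + card B' = card A + card B"
proof -
  show "sset A' B' \<subseteq> sset A B"
  proof
    fix z assume "z \<in> sset A' B'"
    then obtain x y where z: "z = x + y" "x \<in> A'" "y \<in> B'" unfolding sset_def by blast
    show "z \<in> sset A B"
    proof (cases "x \<in> A")
      case True then show ?thesis using z unfolding sset_def B'_def by blast
    next
      case False
      then obtain b where b: "b \<in> B" "x = b + e" using z unfolding A'_def by blast
      have "z = (y + e) + b" using z b by (simp add: algebra_simps)
      then show ?thesis using b z unfolding sset_def B'_def by blast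
    qed
  qed
  have inj: "inj_on (\<lambda>b. b + e) X" for X by (simp add: inj_on_def)
  have "A \<inter> (\<lambda>b. b + e) ` B = (\<lambda>b. b + e) ` B'" unfolding B'_def by auto
  then have "card (A \<inter> (\<lambda>b. b + e) ` B) = card B'" using inj by (simp add: card_image)
  moreover have "card ((\<lambda>b. b + e) ` B) = card B" using inj by (simp add: card_image)
  ultimately show "card A' + card B' = card A + card B"
    using card_Un_Int[of A "(\<lambda>b. b + e) ` B"] assms(1,2) unfolding A'_def by simp
qed

text \<open>Cauchy-Davenport, by induction on |B|: if |B| \<ge> 2 and A \<noteq> Z_p, a suitable e-transform
  strictly shrinks B while keeping it nonempty.\<close>

theorem cauchy_davenport:
  fixes A B :: "'p::finite mod_ring set"
  assumes p: "prime CARD('p)" and "A \<noteq> {}" and "B \<noteq> {}"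
  shows "card (sset A B) \<ge> min CARD('p) (card A + card B - 1)"
  using assms(2,3)
proof (induction "card B" arbitrary: A B rule: less_induct)
  case less
  consider "card B \<le> 1" | "A = UNIV" | "card B > 1" "A \<noteq> UNIV" by linarith
  then show ?case
  proof cases
    case 1
    then have "card B = 1" using less.prems card_gt_0_iff[of B] by simp
    then obtain b where B: "B = {b}" by (rule card_1_singletonE)
    have "sset A B = (\<lambda>a. a + b) ` A" unfolding sset_def B by auto
    then show ?thesis using B by (simp add: card_image)
  next
    case 2
    obtain b0 where "b0 \<in> B" using less.prems by blast
    then have "sset A B = UNIV" unfolding sset_def 2 by auto (metis diff_add_cancel)
    then show ?thesis by simp
  next
    case 3
    then obtain b0 b1 where b01: "b0 \<in> B" "b1 \<in> B" "b0 \<noteq> b1"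
      by (metis card_le_Suc0_iff_eq finite One_nat_def not_le)
    obtain a0 where "a0 \<in> A" using less.prems by blast
    txt \<open>Since A is not invariant under translation by b1 - b0, some a leaves A.\<close>
    have "b1 - b0 \<noteq> 0" using b01 by simp
    then obtain a where a: "a \<in> A" "a + (b1 - b0) \<notin> A"
      using shift_invariant_is_UNIV[OF p _ \<open>a0 \<in> A\<close>] 3 by blast
    define e where "e = a - b0"
    define A' where "A' = A \<union> (\<lambda>b. b + e) ` B"
    define B' where "B' = B \<inter> {y. y + e \<in> A}"
    have "b0 \<in> B'" unfolding B'_def e_def using a b01 by simp
    have "b1 \<notin> B'" unfolding B'_def e_def using a by (simp add: algebra_simps)
    then have "card B' < card B"
      by (intro psubset_card_mono) (use b01 in \<open>auto simp: B'_def\<close>)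
    then have "min CARD('p) (card A' + card B' - 1) \<le> card (sset A' B')"
      using less.hyps \<open>b0 \<in> B'\<close> less.prems unfolding A'_def by blast
    also have "\<dots> \<le> card (sset A B)"
      using dyson_transform(1)[of A B e] unfolding A'_def B'_def by (intro card_mono) simp_all
    finally show ?thesis
      using dyson_transform(2)[of A B e] unfolding A'_def B'_def by simp
  qed
qed

section \<open>Iterated sumsets and the diameter\<close>

lemma card_eq_UNIV:
  fixes S :: "'a::finite set"
  assumes "card S \<ge> CARD('a)" shows "S = UNIV"
  using assms card_seteq[of "UNIV :: 'a set" S] by simp

lemma sumset_pow_Suc_sset: "sumset_pow (Suc n) A = sset (insert 0 A) (sumset_pow n A)"
  by (simp add: sset_def)

lemma zero_in_sumset_pow: "(0::'a::ab_group_add) \<in> sumset_pow n A"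
  by (induction n) force+

lemma sumset_pow_mono: "n \<le> m \<Longrightarrow> sumset_pow n A \<subseteq> sumset_pow m (A::'a::ab_group_add set)"
proof (induction m rule: dec_induct)
  case (step m)
  have "sumset_pow m A \<subseteq> sumset_pow (Suc m) A" by (auto simp: sset_def) (metis add_0)
  with step.IH show ?case by blast
qed simp

lemma diam_ge_iff:
  fixes A :: "'a::ab_group_add set"
  assumes "rho \<ge> 1"
  shows "enat rho \<le> diam_plus A \<longleftrightarrow> sumset_pow (rho - 1) A \<noteq> UNIV"
proof
  assume h: "enat rho \<le> diam_plus A"
  show "sumset_pow (rho - 1) A \<noteq> UNIV"
  proof
    assume u: "sumset_pow (rho - 1) A = UNIV"
    then have "(LEAST r. sumset_pow r A = UNIV) \<le> rho - 1" by (rule Least_le)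
    moreover have "\<exists>r. sumset_pow r A = UNIV" using u by blast
    ultimately show False using h assms unfolding diam_plus_def by simp
  qed
next
  assume h: "sumset_pow (rho - 1) A \<noteq> UNIV"
  have rho_le: "rho \<le> r" if r: "sumset_pow r A = UNIV" for r
  proof (rule ccontr)
    assume "\<not> rho \<le> r"
    then have "sumset_pow r A \<subseteq> sumset_pow (rho - 1) A" by (intro sumset_pow_mono) simp
    then show False using r h by auto
  qed
  show "enat rho \<le> diam_plus A"
  proof (cases "\<exists>r. sumset_pow r A = UNIV")
    case True
    then have "rho \<le> (LEAST r. sumset_pow r A = UNIV)" using rho_le by (rule LeastI2_ex)
    then show ?thesis using True unfolding diam_plus_def by simp
  qed (simp add: diam_plus_def)
qed

lemma card_sumset_pow_lower:
  fixes A :: "'p::finite mod_ring set"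
  assumes p: "prime CARD('p)"
  shows "card (sumset_pow n A) \<ge> min CARD('p) (n * (card (insert 0 A) - 1) + 1)"
proof (induction n)
  case (Suc n)
  define m where "m = card (insert 0 A)"
  define S where "S = sumset_pow n A"
  have "m \<ge> 1" unfolding m_def by (simp add: card_gt_0_iff Suc_le_eq)
  have "min CARD('p) (m + card S - 1) \<le> card (sumset_pow (Suc n) A)"
    unfolding sumset_pow_Suc_sset m_def S_def
    using cauchy_davenport[OF p, of "insert 0 A" "sumset_pow n A"] zero_in_sumset_pow by blast
  moreover have "min CARD('p) (Suc n * (m - 1) + 1) \<le> min CARD('p) (m + card S - 1)"
    using Suc \<open>m \<ge> 1\<close> unfolding S_def m_def by (cases "card S \<ge> CARD('p)") auto
  ultimately show ?case unfolding m_def by linarith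
qed simp

lemma card_le_of_diam_ge:
  fixes A :: "'p::finite mod_ring set"
  assumes p: "prime CARD('p)" and r: "2 \<le> rho" and diam: "enat rho \<le> diam_plus A"
  shows "card A \<le> (CARD('p) - 2) div (rho - 1) + 1"
proof -
  define k where "k = card (insert 0 A)"
  have "sumset_pow (rho - 1) A \<noteq> UNIV" using diam_ge_iff[of rho A] r diam by simp
  then have "card (sumset_pow (rho - 1) A) < CARD('p)"
    using card_eq_UNIV[of "sumset_pow (rho - 1) A"] CARD_mod_ring by (metis not_le)
  moreover have "min CARD('p) ((rho - 1) * (k - 1) + 1) \<le> card (sumset_pow (rho - 1) A)"
    using card_sumset_pow_lower[OF p, of "rho - 1" A] unfolding k_def .
  ultimately have "(k - 1) * (rho - 1) \<le> CARD('p) - 2" by (simp add: mult.commute)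
  then have "k - 1 \<le> (CARD('p) - 2) div (rho - 1)"
    using r by (simp add: less_eq_div_iff_mult_less_eq)
  moreover have "card A \<le> k" unfolding k_def by (rule card_mono) auto
  ultimately show ?thesis by linarith
qed

text \<open>A set containing a nonzero element has finite diameter (its (p-1)-fold sumset is Z_p).\<close>

lemma diam_finite_if_nonzero:
  fixes A :: "'p::finite mod_ring set"
  assumes p: "prime CARD('p)" and "d \<in> A" and "d \<noteq> 0"
  shows "diam_plus A < \<infinity>"
proof -
  have "{0, d} \<subseteq> insert 0 A" using assms(2) by blast
  then have "2 \<le> card (insert 0 A)" using assms(3) card_mono[of "insert 0 A" "{0, d}"] by simp
  then have "(CARD('p) - 1) * 1 \<le> (CARD('p) - 1) * (card (insert 0 A) - 1)"
    by (intro mult_le_mono2) simp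
  moreover have "CARD('p) > 1" using p prime_gt_1_nat by blast
  ultimately have "CARD('p) \<le> (CARD('p) - 1) * (card (insert 0 A) - 1) + 1" by linarith
  then have "CARD('p) \<le> card (sumset_pow (CARD('p) - 1) A)"
    using card_sumset_pow_lower[OF p, of "CARD('p) - 1" A] by simp
  then have "sumset_pow (CARD('p) - 1) A = UNIV"
    using card_eq_UNIV[of "sumset_pow (CARD('p) - 1) A"] by simp
  then show ?thesis unfolding diam_plus_def by auto
qed

text \<open>A set of diameter at least \<rho> attaining the upper bound is \<rho>-maximal: every strict
  superset is too large to have diameter at least \<rho>.\<close>

lemma rho_maximal_if_card_extremal:
  fixes A :: "'p::finite mod_ring set"
  assumes p: "prime CARD('p)" and r: "2 \<le> rho" and diam: "enat rho \<le> diam_plus A"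
    and card: "card A = (CARD('p) - 2) div (rho - 1) + 1"
  shows "rho_maximal rho A"
  unfolding rho_maximal_def
proof (intro conjI allI impI diam notI)
  fix B assume "A \<subset> B" and "enat rho \<le> diam_plus B"
  then have "card A < card B" and "card B \<le> card A"
    using psubset_card_mono[of B A] card_le_of_diam_ge[OF p r, of B] card by simp_all
  then show False by simp
qed

section \<open>The extremal example: an initial segment of Z_p\<close>

definition initial_segment :: "nat \<Rightarrow> 'p::finite mod_ring set" where
  "initial_segment M = of_int_mod_ring ` {0..<int M}"

lemma card_initial_segment:
  assumes "M \<le> CARD('p::finite)"
  shows "card (initial_segment M :: 'p mod_ring set) = M"
proof -
  have "inj_on (of_int_mod_ring :: int \<Rightarrow> 'p mod_ring) {0..<int M}"
    using assms by (intro inj_onI) (auto simp: of_int_mod_ring_eq_iff cong_def)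
  then show ?thesis unfolding initial_segment_def by (simp add: card_image)
qed

lemma one_in_initial_segment:
  assumes "M \<ge> 2" and "CARD('p::finite) \<ge> 2"
  shows "of_int_mod_ring 1 \<in> (initial_segment M :: 'p mod_ring set)"
    and "(of_int_mod_ring 1 :: 'p mod_ring) \<noteq> 0"
proof -
  show "of_int_mod_ring 1 \<in> (initial_segment M :: 'p mod_ring set)"
    using assms(1) unfolding initial_segment_def by force
  show "(of_int_mod_ring 1 :: 'p mod_ring) \<noteq> 0"
    using assms(2) of_int_mod_ring_eq_iff[of 1 0, where 'p='p] by (simp add: cong_def)
qed

lemma sumset_pow_initial_segment:
  assumes "M \<ge> 1"
  shows "sumset_pow n (initial_segment M :: 'p::finite mod_ring set)
           \<subseteq> of_int_mod_ring ` {0..int (n * (M - 1))}"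
proof (induction n)
  case 0 then show ?case by (auto intro: image_eqI[of 0 _ 0])
next
  case (Suc n)
  show ?case
  proof
    fix z assume "z \<in> sumset_pow (Suc n) (initial_segment M :: 'p mod_ring set)"
    then obtain a b where ab: "z = a + b" "a \<in> insert 0 (initial_segment M)"
      "b \<in> sumset_pow n (initial_segment M)" by auto
    have "0 \<in> (initial_segment M :: 'p mod_ring set)"
      using assms unfolding initial_segment_def by (auto intro: image_eqI[of 0 _ 0])
    then obtain i where i: "a = of_int_mod_ring i" "0 \<le> i" "i \<le> int (M - 1)"
      using ab(2) unfolding initial_segment_def by (auto simp: insert_absorb)
    obtain j where j: "b = of_int_mod_ring j" "0 \<le> j" "j \<le> int (n * (M - 1))" using ab(3) Suc by auto
    have "z = of_int_mod_ring (i + j)" using ab i j of_int_mod_ring_add by metis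
    moreover have "i + j \<le> int (Suc n * (M - 1))" using i j by simp
    ultimately show "z \<in> of_int_mod_ring ` {0..int (Suc n * (M - 1))}" using i j by auto
  qed
qed

lemma diam_initial_segment_ge:
  assumes "M \<ge> 1" and "rho \<ge> 1" and small: "(rho - 1) * (M - 1) + 1 < CARD('p::finite)"
  shows "enat rho \<le> diam_plus (initial_segment M :: 'p mod_ring set)"
proof -
  let ?S = "sumset_pow (rho - 1) (initial_segment M :: 'p mod_ring set)"
  have "card ?S \<le> card (of_int_mod_ring ` {0..int ((rho - 1) * (M - 1))} :: 'p mod_ring set)"
    using sumset_pow_initial_segment[OF assms(1)] by (intro card_mono) auto
  also have "\<dots> \<le> card {0..int ((rho - 1) * (M - 1))}" by (rule card_image_le) simp
  also have "\<dots> = (rho - 1) * (M - 1) + 1" by (simp only: card_atLeastAtMost_int)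
  finally have "?S \<noteq> UNIV" using small by auto
  then show ?thesis using diam_ge_iff assms(2) by blast
qed

text \<open>Size bounds for M = \<lfloor>(p-2)/(\<rho>-1)\<rfloor> + 1 that make the initial segment of length M extremal.\<close>

lemma extremal_size_bounds:
  fixes P rho :: nat
  assumes "2 \<le> rho" and "rho \<le> P - 1"
  defines "M \<equiv> (P - 2) div (rho - 1) + 1"
  shows "2 \<le> M" and "M < P" and "(rho - 1) * (M - 1) + 1 < P"
proof -
  have "0 < (P - 2) div (rho - 1)" using assms(1,2) by (subst div_greater_zero_iff) linarith
  then show "2 \<le> M" unfolding M_def by simp
  show "M < P" using assms(1,2) div_le_dividend[of "P - 2" "rho - 1"] unfolding M_def by linarith
  have "(rho - 1) * ((P - 2) div (rho - 1)) \<le> P - 2" by (simp add: mult.commute)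
  moreover have "M - 1 = (P - 2) div (rho - 1)" unfolding M_def by simp
  ultimately have "(rho - 1) * (M - 1) \<le> P - 2" by simp
  then show "(rho - 1) * (M - 1) + 1 < P" using assms(1,2) by linarith
qed

theorem corollary2p6:
  fixes rho :: nat
  assumes "prime CARD('p::finite)"
    and "2 \<le> rho" and "rho \<le> CARD('p) - 1"
  shows "t_rho rho TYPE('p mod_ring) = s_rho rho TYPE('p mod_ring)
       \<and> s_rho rho TYPE('p mod_ring) = (CARD('p) - 2) div (rho - 1) + 1"
proof -
  note p = assms(1)
  define M where "M = (CARD('p) - 2) div (rho - 1) + 1"
  define A :: "'p mod_ring set" where "A = initial_segment M"
  have "CARD('p) \<ge> 3" using assms by linarith
  have "M \<ge> 2" "M < CARD('p)" "(rho - 1) * (M - 1) + 1 < CARD('p)"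
    using extremal_size_bounds[OF assms(2,3)] unfolding M_def by auto
  then have card: "card A = M" and diam: "enat rho \<le> diam_plus A"
    and one: "of_int_mod_ring 1 \<in> A" "(of_int_mod_ring 1 :: 'p mod_ring) \<noteq> 0"
    using card_initial_segment[where 'p='p] diam_initial_segment_ge[of M rho, where 'p='p]
      one_in_initial_segment[where 'p='p] \<open>CARD('p) \<ge> 3\<close> assms(2)
    unfolding A_def by auto
  have "A \<noteq> UNIV" using card \<open>M < CARD('p)\<close> by auto
  then have witness: "diam_plus A < \<infinity>" "rho_maximal rho A" "aperiodic A" "generates A"
    using diam_finite_if_nonzero[OF p one] rho_maximal_if_card_extremal[OF p assms(2) diam]
      aperiodic_if_proper[OF p] generates_if_nonzero[OF p one] one card
    unfolding M_def by auto
  have bound: "card B \<le> M" if "enat rho \<le> diam_plus B" for B :: "'p mod_ring set"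
    using card_le_of_diam_ge[OF p assms(2) that] unfolding M_def .
  have bound_maximal: "card B \<le> M" if "rho_maximal rho B" for B :: "'p mod_ring set"
    using bound that unfolding rho_maximal_def by blast
  have "s_rho rho TYPE('p mod_ring) = M"
    unfolding s_rho_def by (rule Max_eqI) (use bound diam witness card in auto)
  moreover have "t_rho rho TYPE('p mod_ring) = M"
    unfolding t_rho_def
  proof (rule Max_eqI)
    show "M \<in> insert 0 (card ` {A :: 'p mod_ring set. aperiodic A \<and> rho_maximal rho A \<and> generates A})"
      using witness card by blast
  qed (use bound_maximal in auto)
  ultimately show ?thesis unfolding M_def by simp
qed

end
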